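(* Let $K_1, K_2, K_3 > 0$ and $h_c \in (0,\infty)$, and set $L_j = K_j \tanh(K_j h_c)$ for $j=1,2,3$. Let $\Omega_1 = \sqrt{L_1}$, $\Omega_2 = \sqrt{L_2}$, $\Omega_3 = -\sqrt{L_3}$, and suppose $\Omega_1 + \Omega_2 + \Omega_3 = 0$. Define $$\beta = \sum_{l=1}^3 \Omega_l K_l^2 - \frac{1}{2}\Omega_1\Omega_2\Omega_3\big(\Omega_1^2 + \Omega_2^2 + \Omega_3^2\big).$$ Then $\beta < 0$.
   Context: Here $K_j$ are wavenumbers of three linear wave modes in a cylinder of depth $h_c$, $\Omega_j$ are signed angular frequencies satisfying the finite-depth dispersion relation $\Omega_j^2 = K_j\tanh(K_j h_c)$, and the condition $\Omega_1+\Omega_2+\Omega_3=0$ expresses exact triad resonance at depth $h_c$. The quantity $\beta$ enters the triad interaction coefficients $\alpha_j = \mathscr{C}\beta/(2\Omega_j)$. *)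

theory Defs
  imports Complex_Main
begin

end

(*
  Write Omega(K)^2 = dispersion h K = K tanh (K h) and psi(K) = K^2 - Omega(K)^4 / 5.
  Because the three signed frequencies sum to zero,
    2 (Omega1^5 + Omega2^5 + Omega3^5) = 5 Omega1 Omega2 Omega3 (Omega1^2 + Omega2^2 + Omega3^2),
  which absorbs the cubic term of beta and leaves
    beta = Omega1 psi(K1) + Omega2 psi(K2) + Omega3 psi(K3)
         = Omega1 (psi(K1) - psi(K3)) + Omega2 (psi(K2) - psi(K3)).
  Resonance gives Omega3^2 = (Omega1 + Omega2)^2 > Omega1^2, Omega2^2, so K3 > K1, K2 because
  the dispersion relation is increasing.  Finally psi is increasing, since
  psi'(K) = 2K/5 (5 - t^2 - t s) with t = tanh (K h) < 1 and s = K h sech^2 (K h) < 1;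
  hence beta < 0.
*)
theory Submission
  imports Defs
begin

lemma sum_fifth_powers_of_zero_sum:
  fixes a b c :: "'a :: comm_ring_1"
  assumes "a + b + c = 0"
  shows "2 * (a ^ 5 + b ^ 5 + c ^ 5) = 5 * a * b * c * (a\<^sup>2 + b\<^sup>2 + c\<^sup>2)"
proof -
  have "c = - (a + b)"
    using assms by (metis add.commute eq_neg_iff_add_eq_0)
  show ?thesis unfolding \<open>c = - (a + b)\<close>
    by (simp add: power2_eq_square power_numeral_reduce algebra_simps)
qed

lemma real_sqrt_pow4:
  assumes "0 \<le> x"
  shows "sqrt x ^ 4 = x\<^sup>2"
proof -
  have "sqrt x ^ 4 = (sqrt x ^ 2) ^ 2" by (simp flip: power_mult)
  with assms show ?thesis by simp
qed

lemma one_minus_tanh_sq_real: "1 - tanh x ^ 2 = 1 / cosh x ^ 2" for x :: real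
proof -
  have "1 - tanh x ^ 2 = (cosh x ^ 2 - sinh x ^ 2) / cosh x ^ 2"
    by (simp add: tanh_def power_divide field_simps)
  then show ?thesis by (simp add: hyperbolic_pythagoras)
qed

lemma le_sinh_real: "0 \<le> x \<Longrightarrow> x \<le> sinh (x :: real)"
  using real_le_x_sinh by (simp add: sinh_field_def exp_minus)

lemma mult_sech_sq_less_1: "x * (1 - tanh x ^ 2) < (1 :: real)"
proof (cases "x \<le> 0")
  case True
  have "tanh x ^ 2 < 1"
    using tanh_real_bounds[of x] by (simp add: abs_square_less_1 abs_less_iff)
  with True show ?thesis using mult_nonpos_nonneg[of x "1 - tanh x ^ 2"] by linarith
next
  case False
  have "x < cosh x" using le_sinh_real[of x] sinh_less_cosh_real[of x] False by simp
  also have "\<dots> \<le> cosh x ^ 2" using cosh_real_ge_1[of x] by (simp add: power2_eq_square)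
  finally show ?thesis by (simp add: one_minus_tanh_sq_real)
qed

definition dispersion :: "real \<Rightarrow> real \<Rightarrow> real" where
  "dispersion h k = k * tanh (k * h)"

lemma dispersion_pos: "0 < h \<Longrightarrow> 0 < k \<Longrightarrow> 0 < dispersion h k"
  by (simp add: dispersion_def)

lemma strict_mono_on_dispersion:
  assumes "0 < h"
  shows "strict_mono_on {0..} (dispersion h)"
proof (rule strict_mono_onI)
  fix k k' :: real
  assume "k \<in> {0..}" "k < k'"
  then show "dispersion h k < dispersion h k'"
    using assms by (auto simp: dispersion_def intro!: mult_strict_mono)
qed

lemma has_real_derivative_dispersion:
  "(dispersion h has_real_derivative tanh (k * h) + k * h * (1 - tanh (k * h) ^ 2)) (at k)"
  unfolding dispersion_def by (rule derivative_eq_intros refl | simp)+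

lemma strict_mono_on_sq_minus_dispersion_sq:
  assumes "0 < h"
  shows "strict_mono_on {0<..} (\<lambda>k. k\<^sup>2 - (dispersion h k)\<^sup>2 / 5)"
proof (rule strict_mono_onI)
  fix k1 k2 :: real
  assume "k1 \<in> {0<..}" "k1 < k2"
  show "k1\<^sup>2 - (dispersion h k1)\<^sup>2 / 5 < k2\<^sup>2 - (dispersion h k2)\<^sup>2 / 5"
  proof (rule DERIV_pos_imp_increasing[where f = "\<lambda>k. k\<^sup>2 - (dispersion h k)\<^sup>2 / 5"])
    show "k1 < k2" by fact
  next
    fix k :: real
    assume "k1 \<le> k"
    with \<open>k1 \<in> {0<..}\<close> have "0 < k" by simp
    define t where "t = tanh (k * h)"
    define s where "s = k * h * (1 - t\<^sup>2)"
    have "((\<lambda>k. k\<^sup>2 - (dispersion h k)\<^sup>2 / 5) has_real_derivative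
            2 * k - 2 / 5 * dispersion h k * (t + s)) (at k)"
      unfolding t_def s_def
      by (rule derivative_eq_intros has_real_derivative_dispersion refl | simp)+
    also have "2 * k - 2 / 5 * dispersion h k * (t + s) = 2 * k / 5 * (5 - t\<^sup>2 - t * s)"
      unfolding dispersion_def t_def[symmetric] by (simp add: algebra_simps power2_eq_square)
    finally have deriv: "((\<lambda>k. k\<^sup>2 - (dispersion h k)\<^sup>2 / 5) has_real_derivative
            2 * k / 5 * (5 - t\<^sup>2 - t * s)) (at k)" .
    have "0 \<le> t" "t < 1"
      using \<open>0 < k\<close> assms by (simp_all add: t_def tanh_real_lt_1)
    moreover have "s < 1"
      using mult_sech_sq_less_1[of "k * h"] by (simp add: s_def t_def)
    ultimately have "t * s < 1" "t\<^sup>2 < 1"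
      by (smt (verit) mult_le_cancel_left2, simp add: power_less_one_iff)
    with \<open>0 < k\<close> have "0 < 2 * k / 5 * (5 - t\<^sup>2 - t * s)" by simp
    with deriv show "\<exists>y. ((\<lambda>k. k\<^sup>2 - (dispersion h k)\<^sup>2 / 5) has_real_derivative y) (at k) \<and> 0 < y"
      by blast
  qed
qed

lemma less_of_sqrt_dispersion_add_eq:
  assumes "0 < h" "0 < k1" "0 < k2" "0 < k3"
    and "sqrt (dispersion h k1) + sqrt (dispersion h k2) = sqrt (dispersion h k3)"
  shows "k1 < k3" "k2 < k3"
proof -
  have "0 < sqrt (dispersion h k1)" "0 < sqrt (dispersion h k2)"
    using assms by (simp_all add: dispersion_pos)
  with assms(5) have "sqrt (dispersion h k1) < sqrt (dispersion h k3)"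
    and "sqrt (dispersion h k2) < sqrt (dispersion h k3)"
    by linarith+
  then have "dispersion h k1 < dispersion h k3" "dispersion h k2 < dispersion h k3"
    by simp_all
  then show "k1 < k3" "k2 < k3"
    using strict_mono_on_less[OF strict_mono_on_dispersion[OF \<open>0 < h\<close>]] assms(2-4) by simp_all
qed

theorem mainTheorem2:
  fixes K1 K2 K3 h\<^sub>c :: real
  assumes "K1 > 0" and "K2 > 0" and "K3 > 0" and "h\<^sub>c > 0"
  defines "L1 \<equiv> K1 * tanh (K1 * h\<^sub>c)"
      and "L2 \<equiv> K2 * tanh (K2 * h\<^sub>c)"
      and "L3 \<equiv> K3 * tanh (K3 * h\<^sub>c)"
  defines "\<Omega>1 \<equiv> sqrt L1" and "\<Omega>2 \<equiv> sqrt L2" and "\<Omega>3 \<equiv> - sqrt L3"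
  assumes "\<Omega>1 + \<Omega>2 + \<Omega>3 = 0"
  defines "\<beta> \<equiv> (\<Omega>1 * K1\<^sup>2 + \<Omega>2 * K2\<^sup>2 + \<Omega>3 * K3\<^sup>2)
                 - 1/2 * \<Omega>1 * \<Omega>2 * \<Omega>3 * (\<Omega>1\<^sup>2 + \<Omega>2\<^sup>2 + \<Omega>3\<^sup>2)"
  shows "\<beta> < 0"
proof -
  define \<psi> where "\<psi> k = k\<^sup>2 - (dispersion h\<^sub>c k)\<^sup>2 / 5" for k
  have L: "L1 = dispersion h\<^sub>c K1" "L2 = dispersion h\<^sub>c K2" "L3 = dispersion h\<^sub>c K3"
    by (simp_all add: L1_def L2_def L3_def dispersion_def)
  have "0 < L1" "0 < L2" "0 < L3"
    unfolding L using assms(1-4) by (simp_all add: dispersion_pos)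
  then have \<Omega>_pow4: "\<Omega>1 ^ 4 = L1\<^sup>2" "\<Omega>2 ^ 4 = L2\<^sup>2" "\<Omega>3 ^ 4 = L3\<^sup>2" and "0 < \<Omega>1" "0 < \<Omega>2"
    by (simp_all add: \<Omega>1_def \<Omega>2_def \<Omega>3_def real_sqrt_pow4)
  have \<Omega>3_eq: "\<Omega>3 = - (\<Omega>1 + \<Omega>2)"
    using \<open>\<Omega>1 + \<Omega>2 + \<Omega>3 = 0\<close> by linarith
  then have "K1 < K3" "K2 < K3"
    using less_of_sqrt_dispersion_add_eq[of h\<^sub>c K1 K2 K3] assms(1-4)
    by (simp_all add: \<Omega>1_def \<Omega>2_def \<Omega>3_def L)
  then have "\<psi> K1 < \<psi> K3" "\<psi> K2 < \<psi> K3"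
    using strict_mono_onD[OF strict_mono_on_sq_minus_dispersion_sq[OF \<open>0 < h\<^sub>c\<close>]] assms(1-3)
    by (simp_all add: \<psi>_def)
  have "\<beta> = \<Omega>1 * K1\<^sup>2 + \<Omega>2 * K2\<^sup>2 + \<Omega>3 * K3\<^sup>2 - (\<Omega>1 ^ 5 + \<Omega>2 ^ 5 + \<Omega>3 ^ 5) / 5"
    using sum_fifth_powers_of_zero_sum[OF \<open>\<Omega>1 + \<Omega>2 + \<Omega>3 = 0\<close>]
    unfolding \<beta>_def by (simp add: algebra_simps)
  also have "\<dots> = \<Omega>1 * \<psi> K1 + \<Omega>2 * \<psi> K2 + \<Omega>3 * \<psi> K3"
    unfolding \<psi>_def L[symmetric] \<Omega>_pow4[symmetric] by (simp add: algebra_simps power_numeral_reduce)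
  also have "\<dots> = \<Omega>1 * (\<psi> K1 - \<psi> K3) + \<Omega>2 * (\<psi> K2 - \<psi> K3)"
    unfolding \<Omega>3_eq by (simp add: algebra_simps)
  also have "\<dots> < 0"
    using \<open>0 < \<Omega>1\<close> \<open>0 < \<Omega>2\<close> \<open>\<psi> K1 < \<psi> K3\<close> \<open>\<psi> K2 < \<psi> K3\<close>
    by (simp add: add_neg_neg mult_pos_neg)
  finally show ?thesis .
qed

end
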